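(* Let $H$ be a complex Hilbert space, $A\in B(H)$ a nonzero positive semidefinite operator, and let $T\in B_{A^{1/2}}(H)$ be $A$-invertible in $B_{A^{1/2}}(H)$ with an $A$-inverse $S\in B_{A^{1/2}}(H)$. Then $r_A(T)\,r_A(S)\ge 1$.
   Context: $\|x\|_A=\langle Ax,x\rangle^{1/2}$. For $X\in B(H)$, $\|X\|_A=\sup\{\|Xx\|_A : x\in\overline{R(A)},\ \|x\|_A=1\}$. $B_{A^{1/2}}(H)=\{X\in B(H): R(X^*A^{1/2})\subset R(A^{1/2})\}$. $r_A(X)=\lim_{n\to\infty}\|X^n\|_A^{1/n}$. A nonzero $T\in B_{A^{1/2}}(H)$ is $A$-invertible in $B_{A^{1/2}}(H)$ if there is a nonzero $S\in B_{A^{1/2}}(H)$ (an $A$-inverse of $T$) with $ATS=AST=A$. *)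

theory Defs
  imports "HOL-Analysis.Analysis"
begin

class complex_inner = real_inner +
  fixes scaleC :: "complex \<Rightarrow> 'a \<Rightarrow> 'a"
    and cinner :: "'a \<Rightarrow> 'a \<Rightarrow> complex"
  assumes scaleR_scaleC: "scaleR r x = scaleC (complex_of_real r) x"
    and scaleC_add_right: "scaleC a (x + y) = scaleC a x + scaleC a y"
    and scaleC_add_left: "scaleC (a + b) x = scaleC a x + scaleC b x"
    and scaleC_scaleC: "scaleC a (scaleC b x) = scaleC (a * b) x"
    and scaleC_one: "scaleC 1 x = x"
    and cinner_commute: "cinner x y = cnj (cinner y x)"
    and cinner_add_left: "cinner (x + y) z = cinner x z + cinner y z"
    and cinner_scaleC_left: "cinner (scaleC a x) y = cnj a * cinner x y"
    and Re_cinner: "Re (cinner x y) = inner x y"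

class chilbert = complex_inner + complete_space

definition bounded_clinear :: "('a::complex_inner \<Rightarrow> 'a) \<Rightarrow> bool" where
  "bounded_clinear X \<longleftrightarrow> bounded_linear X \<and> (\<forall>c x. X (scaleC c x) = scaleC c (X x))"

definition positive_op :: "('a::complex_inner \<Rightarrow> 'a) \<Rightarrow> bool" where
  "positive_op A \<longleftrightarrow> (\<forall>x. Im (cinner (A x) x) = 0 \<and> Re (cinner (A x) x) \<ge> 0)"

definition adjoint_op :: "('a::complex_inner \<Rightarrow> 'a) \<Rightarrow> ('a \<Rightarrow> 'a)" where
  "adjoint_op X = (THE Y. \<forall>x y. cinner (X x) y = cinner x (Y y))"

definition op_sqrt :: "('a::complex_inner \<Rightarrow> 'a) \<Rightarrow> ('a \<Rightarrow> 'a)" where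
  "op_sqrt A = (THE R. bounded_clinear R \<and> positive_op R \<and> (\<forall>x. R (R x) = A x))"

definition B_half :: "('a::complex_inner \<Rightarrow> 'a) \<Rightarrow> ('a \<Rightarrow> 'a) set" where
  "B_half A = {X. bounded_clinear X \<and>
      range (\<lambda>x. adjoint_op X (op_sqrt A x)) \<subseteq> range (op_sqrt A)}"

definition A_norm :: "('a::complex_inner \<Rightarrow> 'a) \<Rightarrow> 'a \<Rightarrow> real" where
  "A_norm A x = sqrt (Re (cinner (A x) x))"

definition A_opnorm :: "('a::complex_inner \<Rightarrow> 'a) \<Rightarrow> ('a \<Rightarrow> 'a) \<Rightarrow> real" where
  "A_opnorm A X = Sup {A_norm A (X x) | x. x \<in> closure (range A) \<and> A_norm A x = 1}"

definition A_spectral_radius :: "('a::complex_inner \<Rightarrow> 'a) \<Rightarrow> ('a \<Rightarrow> 'a) \<Rightarrow> real" where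
  "A_spectral_radius A X = lim (\<lambda>n. A_opnorm A (X ^^ n) powr (1 / real n))"

definition A_inverse :: "('a::complex_inner \<Rightarrow> 'a) \<Rightarrow> ('a \<Rightarrow> 'a) \<Rightarrow> ('a \<Rightarrow> 'a) \<Rightarrow> bool" where
  "A_inverse A T S \<longleftrightarrow> T \<in> B_half A \<and> S \<in> B_half A \<and> T \<noteq> (\<lambda>x. 0) \<and> S \<noteq> (\<lambda>x. 0) \<and>
     (\<forall>x. A (T (S x)) = A x) \<and> (\<forall>x. A (S (T x)) = A x)"

end

theory Submission
  imports Defs
begin

text \<open>For every \<open>n\<close>, \<open>S\<^sup>n\<close> is an \<open>A\<close>-inverse of \<open>T\<^sup>n\<close> modulo the kernel of \<open>A\<close>, which
  \<open>A\<close>-bounded operators preserve; evaluating \<open>T\<^sup>n S\<^sup>n\<close> at an \<open>A\<close>-unit vector of the closed range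
  of \<open>A\<close> gives \<open>1 \<le> \<parallel>T\<^sup>n\<parallel>\<^sub>A \<parallel>S\<^sup>n\<parallel>\<^sub>A\<close>. Both sequences of \<open>A\<close>-seminorms are submultiplicative,
  so by Fekete's lemma their \<open>n\<close>-th roots converge, and the product of the limits is at least 1.

  Most of the work goes into the operators in terms of which \<open>B_half A\<close> is defined: the
  positive square root exists (by the power series of \<open>\<surd>(1 - z)\<close>) and is unique, the adjoint exists by the Riesz representation theorem, and an
  operator in \<open>B_half A\<close> is bounded for the \<open>A\<close>-seminorm (Douglas' lemma, via the uniform
  boundedness principle).\<close>

section \<open>Complex inner product spaces\<close>

context chilbert
begin
subclass banach ..
end

lemma cinner_add_right: "cinner x (y + z) = cinner x y + cinner x z"
  by (metis cinner_commute cinner_add_left complex_cnj_add)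

lemma cinner_scaleC_right: "cinner x (scaleC a y) = a * cinner x y"
  by (metis cinner_commute cinner_scaleC_left complex_cnj_mult complex_cnj_cnj)

lemma cinner_zero_left [simp]: "cinner 0 y = 0"
  using cinner_add_left [of 0 0 y] by simp

lemma cinner_zero_right [simp]: "cinner x 0 = 0"
  using cinner_add_right [of x 0 0] by simp

lemma cinner_minus_left: "cinner (- x) y = - cinner x y"
  using cinner_add_left [of x "- x" y] by (simp add: eq_neg_iff_add_eq_0 add.commute)

lemma cinner_minus_right: "cinner x (- y) = - cinner x y"
  using cinner_add_right [of x y "- y"] by (simp add: eq_neg_iff_add_eq_0 add.commute)

lemma cinner_diff_left: "cinner (x - y) z = cinner x z - cinner y z"
  using cinner_add_left [of x "- y" z] by (simp add: cinner_minus_left)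

lemma cinner_diff_right: "cinner x (y - z) = cinner x y - cinner x z"
  using cinner_add_right [of x y "- z"] by (simp add: cinner_minus_right)

lemma cinner_scaleR_left: "cinner (r *\<^sub>R x) y = of_real r * cinner x y"
  by (simp add: scaleR_scaleC cinner_scaleC_left)

lemma cinner_scaleR_right: "cinner x (r *\<^sub>R y) = of_real r * cinner x y"
  by (simp add: scaleR_scaleC cinner_scaleC_right)

lemma Im_cinner_self: "Im (cinner x x) = 0"
  using cinner_commute [of x x] by (metis cnj.simps(2) neg_equal_zero)

lemma cinner_self_eq_norm: "cinner x x = of_real ((norm x)\<^sup>2)"
  using Im_cinner_self [of x] Re_cinner [of x x]
  by (simp add: complex_eq_iff power2_norm_eq_inner)

lemma cinner_eqI: "(\<And>z. cinner x z = cinner y z) \<Longrightarrow> x = y"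
  using cinner_self_eq_norm [of "x - y"] by (simp add: cinner_diff_left)

lemma scaleC_diff_right: "scaleC a (x - y) = scaleC a x - scaleC a y"
  using scaleC_add_right [of a "x - y" y] by (simp add: eq_diff_eq)

lemma scaleC_scaleR_commute: "scaleC c (r *\<^sub>R x) = r *\<^sub>R scaleC c x"
  by (simp add: scaleR_scaleC scaleC_scaleC mult.commute)

lemma cnj_mult_self: "cnj c * c = of_real ((cmod c)\<^sup>2)"
  by (metis complex_norm_square mult.commute)

lemma norm_scaleC: "norm (scaleC c x) = cmod c * norm x"
proof -
  have "cinner (scaleC c x) (scaleC c x) = (cnj c * c) * cinner x x"
    by (simp add: cinner_scaleC_left cinner_scaleC_right mult.assoc)
  also have "\<dots> = of_real ((cmod c * norm x)\<^sup>2)"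
    by (simp only: cnj_mult_self cinner_self_eq_norm power_mult_distrib of_real_mult)
  finally have "(norm (scaleC c x))\<^sup>2 = (cmod c * norm x)\<^sup>2"
    by (simp only: cinner_self_eq_norm of_real_eq_iff)
  then show ?thesis
    by (simp add: power2_eq_iff_nonneg)
qed

lemma bounded_linear_scaleC: "bounded_linear (scaleC c)"
  by (rule bounded_linear_intro [of _ "cmod c"])
    (simp_all add: scaleC_add_right scaleC_scaleR_commute norm_scaleC mult.commute)

lemma cinner_cauchy_schwarz: "cmod (cinner x y) \<le> norm x * norm y"
proof (cases "cinner x y = 0")
  case False
  define a where "a = cinner x y / of_real (cmod (cinner x y))"
  \<comment> \<open>rotating \<open>x\<close> by the phase of the inner product makes it real\<close>
  have "cinner (scaleC a x) y = of_real ((cmod (cinner x y))\<^sup>2 / cmod (cinner x y))"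
    by (simp add: a_def cinner_scaleC_left cnj_mult_self)
  then have "cmod (cinner x y) = inner (scaleC a x) y"
    using False by (metis Re_cinner Re_complex_of_real power2_eq_square nonzero_mult_div_cancel_left
        norm_eq_zero)
  also have "\<dots> \<le> norm (scaleC a x) * norm y"
    by (rule norm_cauchy_schwarz)
  also have "\<dots> = norm x * norm y"
    using False by (simp add: a_def norm_scaleC norm_divide)
  finally show ?thesis .
qed simp

lemma bounded_linear_cinner_right: "bounded_linear (cinner y)"
proof (rule bounded_linear_intro [of _ "norm y"])
  show "cmod (cinner y x) \<le> norm x * norm y" for x
    by (metis cinner_cauchy_schwarz mult.commute)
qed (simp_all add: cinner_add_right cinner_scaleR_right scaleR_conv_of_real)

lemma bounded_linear_cinner_left: "bounded_linear (\<lambda>x. cinner x y)"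
  by (rule bounded_linear_intro [of _ "norm y"])
    (simp_all add: cinner_add_left cinner_scaleR_left scaleR_conv_of_real cinner_cauchy_schwarz)

section \<open>Orthogonal projection and Riesz representation\<close>

lemma nonneg_quadratic_discriminant:
  fixes a b c :: real
  assumes c: "0 \<le> c" and nonneg: "\<And>t. 0 \<le> a + 2 * t * b + t\<^sup>2 * c"
  shows "b\<^sup>2 \<le> a * c"
proof (cases "c = 0")
  case True
  have "b = 0"
  proof (rule ccontr)
    assume "b \<noteq> 0"
    then have "a + 2 * (- (\<bar>a\<bar> + 1) / (2 * b)) * b = a - (\<bar>a\<bar> + 1)"
      by (simp add: field_simps)
    then show False
      using nonneg [of "- (\<bar>a\<bar> + 1) / (2 * b)"] True by simp
  qed
  with True show ?thesis by simp
next
  case False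
  with c have "0 < c" by simp
  then have "a + 2 * (- b / c) * b + (- b / c)\<^sup>2 * c = a - b\<^sup>2 / c"
    by (simp add: field_simps power2_eq_square)
  then have "b\<^sup>2 / c \<le> a"
    using nonneg [of "- b / c"] by linarith
  then show ?thesis
    by (simp add: pos_divide_le_eq [OF \<open>0 < c\<close>])
qed

lemma parallelogram_law:
  fixes a b :: "'a::real_inner"
  shows "(norm (a + b))\<^sup>2 + (norm (a - b))\<^sup>2 = 2 * (norm a)\<^sup>2 + 2 * (norm b)\<^sup>2"
  by (simp add: power2_norm_eq_inner inner_add_left inner_add_right inner_diff_left
      inner_diff_right inner_commute algebra_simps)

lemma minimizing_sequence_Cauchy:
  fixes u :: "'a::real_inner"
  assumes "convex C" and s_in: "\<And>n. s n \<in> C" and d_le: "\<And>c. c \<in> C \<Longrightarrow> d \<le> norm (u - c)"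
    and "0 \<le> d" and s_near: "\<And>n. (norm (u - s n))\<^sup>2 < d\<^sup>2 + inverse (real (Suc n))"
  shows "Cauchy s"
proof -
  define e where "e n = inverse (real (Suc n))" for n
  \<comment> \<open>the parallelogram law through the midpoint, which lies in \<open>C\<close> by convexity\<close>
  have s_close: "(norm (s j - s k))\<^sup>2 \<le> 2 * (e j + e k)" for j k
  proof -
    have "(1/2) *\<^sub>R s j + (1/2) *\<^sub>R s k \<in> C"
      using \<open>convex C\<close> s_in by (intro convexD) auto
    moreover have "(u - s j) + (u - s k) = 2 *\<^sub>R (u - ((1/2) *\<^sub>R s j + (1/2) *\<^sub>R s k))"
      by (simp add: algebra_simps scaleR_2)
    ultimately have "2 * d \<le> norm ((u - s j) + (u - s k))"
      using d_le by simp
    then have "(2 * d)\<^sup>2 \<le> (norm ((u - s j) + (u - s k)))\<^sup>2"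
      using \<open>0 \<le> d\<close> by (intro power_mono) simp_all
    then show ?thesis
      using parallelogram_law [of "u - s j" "u - s k"] s_near [of j] s_near [of k]
      by (simp add: e_def norm_minus_commute power_mult_distrib)
  qed
  show "Cauchy s"
  proof (rule metric_CauchyI)
    fix \<epsilon> :: real
    assume "0 < \<epsilon>"
    obtain N :: nat where N: "4 / \<epsilon>\<^sup>2 < real N"
      using reals_Archimedean2 by blast
    have "norm (s m - s n) < \<epsilon>" if "N \<le> m" "N \<le> n" for m n
    proof -
      have "e m \<le> e N" "e n \<le> e N"
        using that by (auto simp: e_def intro!: le_imp_inverse_le)
      then have "(norm (s m - s n))\<^sup>2 \<le> 4 * e N"
        using s_close [of m n] by simp
      also have "\<dots> < \<epsilon>\<^sup>2"
        using N \<open>0 < \<epsilon>\<close> by (simp add: e_def field_simps) (smt (verit) zero_less_power)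
      finally show ?thesis
        using \<open>0 < \<epsilon>\<close> by (simp add: power_less_imp_less_base)
    qed
    then show "\<exists>M. \<forall>m\<ge>M. \<forall>n\<ge>M. dist (s m) (s n) < \<epsilon>"
      by (auto simp: dist_norm)
  qed
qed

lemma nearest_point_exists:
  fixes u :: "'a::{real_inner,complete_space}"
  assumes "closed C" and "convex C" and "C \<noteq> {}"
  shows "\<exists>p\<in>C. \<forall>c\<in>C. norm (u - p) \<le> norm (u - c)"
proof -
  define d where "d = infdist u C"
  define e where "e n = inverse (real (Suc n))" for n
  have d_le: "d \<le> norm (u - c)" if "c \<in> C" for c
    using infdist_le [OF that, of u] by (simp add: d_def dist_norm)
  have "0 \<le> d"
    by (simp add: d_def infdist_nonneg)
  have "\<exists>c\<in>C. (norm (u - c))\<^sup>2 < d\<^sup>2 + e n" for n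
  proof -
    have "(INF c\<in>C. dist u c) < sqrt (d\<^sup>2 + e n)"
      using \<open>0 \<le> d\<close> infdist_notempty [OF \<open>C \<noteq> {}\<close>]
      by (simp add: d_def e_def real_less_rsqrt)
    moreover have "bdd_below (dist u ` C)"
      by (rule bdd_belowI [of _ 0]) auto
    ultimately obtain c where "c \<in> C" "dist u c < sqrt (d\<^sup>2 + e n)"
      using cINF_less_iff [OF \<open>C \<noteq> {}\<close>] by blast
    moreover have "(sqrt (d\<^sup>2 + e n))\<^sup>2 = d\<^sup>2 + e n"
      by (simp add: e_def)
    ultimately show ?thesis
      by (metis dist_norm norm_ge_zero power_strict_mono zero_less_numeral)
  qed
  then obtain s where s_in: "\<And>n. s n \<in> C" and s_near: "\<And>n. (norm (u - s n))\<^sup>2 < d\<^sup>2 + e n"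
    by metis
  have "Cauchy s"
    using minimizing_sequence_Cauchy [OF \<open>convex C\<close> s_in d_le \<open>0 \<le> d\<close>] s_near
    by (simp add: e_def)
  then obtain p where "s \<longlonglongrightarrow> p"
    using Cauchy_convergent_iff convergent_def by blast
  then have "p \<in> C"
    using \<open>closed C\<close> s_in closed_sequentially by blast
  have "(norm (u - p))\<^sup>2 \<le> d\<^sup>2"
  proof (rule LIMSEQ_le)
    show "(\<lambda>n. (norm (u - s n))\<^sup>2) \<longlonglongrightarrow> (norm (u - p))\<^sup>2"
      by (intro tendsto_intros \<open>s \<longlonglongrightarrow> p\<close>)
    show "(\<lambda>n. d\<^sup>2 + e n) \<longlonglongrightarrow> d\<^sup>2"
      using tendsto_add [OF tendsto_const LIMSEQ_inverse_real_of_nat] by (simp add: e_def)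
  qed (use s_near less_imp_le in blast)
  then have "norm (u - p) \<le> d"
    using \<open>0 \<le> d\<close> by (rule power2_le_imp_le)
  with \<open>p \<in> C\<close> d_le show ?thesis
    by force
qed

lemma nearest_point_orthogonal:
  fixes u :: "'a::real_inner"
  assumes "subspace M" and "p \<in> M" and nearest: "\<forall>c\<in>M. norm (u - p) \<le> norm (u - c)"
    and "m \<in> M"
  shows "inner (u - p) m = 0"
proof -
  have "0 \<le> 0 + 2 * t * (- inner (u - p) m) + t\<^sup>2 * inner m m" for t
  proof -
    have "p + t *\<^sub>R m \<in> M"
      using assms by (simp add: subspace_add subspace_scale)
    then have "norm (u - p) \<le> norm ((u - p) - t *\<^sub>R m)"
      using nearest by (metis diff_diff_eq)
    then have "(norm (u - p))\<^sup>2 \<le> (norm ((u - p) - t *\<^sub>R m))\<^sup>2"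
      by (simp add: power_mono)
    then show ?thesis
      by (simp only: power2_norm_eq_inner)
        (simp add: inner_diff_left inner_diff_right inner_commute power2_eq_square algebra_simps)
  qed
  then have "(- inner (u - p) m)\<^sup>2 \<le> 0 * inner m m"
    by (intro nonneg_quadratic_discriminant) simp_all
  then show ?thesis
    by simp
qed

lemma orthogonal_projection_exists:
  fixes u :: "'a::chilbert"
  assumes "closed M" and "subspace M" and scaleC_closed: "\<And>c x. x \<in> M \<Longrightarrow> scaleC c x \<in> M"
  shows "\<exists>p\<in>M. \<forall>m\<in>M. cinner (u - p) m = 0"
proof -
  have "M \<noteq> {}"
    using \<open>subspace M\<close> subspace_0 by blast
  then obtain p where "p \<in> M" and nearest: "\<forall>c\<in>M. norm (u - p) \<le> norm (u - c)"
    using nearest_point_exists [of M u] assms subspace_imp_convex by blast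
  have "cinner (u - p) m = 0" if "m \<in> M" for m
  proof -
    have "Re (cinner (u - p) m) = 0" "Re (cinner (u - p) (scaleC \<i> m)) = 0"
      using nearest_point_orthogonal [OF \<open>subspace M\<close> \<open>p \<in> M\<close> nearest] that scaleC_closed
      by (simp_all add: Re_cinner)
    then show ?thesis
      by (simp add: cinner_scaleC_right complex_eq_iff)
  qed
  with \<open>p \<in> M\<close> show ?thesis
    by blast
qed

lemma riesz_representation:
  fixes f :: "'a::chilbert \<Rightarrow> complex"
  assumes "bounded_linear f" and f_scaleC: "\<And>c x. f (scaleC c x) = c * f x"
  shows "\<exists>z. \<forall>x. f x = cinner z x"
proof (cases "\<forall>x. f x = 0")
  case False
  then obtain x0 where "f x0 \<noteq> 0"
    by blast
  interpret f: bounded_linear f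
    by fact
  let ?K = "{x. f x = 0}"
  have "closed ?K"
    by (intro closed_Collect_eq continuous_intros linear_continuous_on \<open>bounded_linear f\<close>)
  moreover have "subspace ?K"
    by (simp add: subspace_def f.add f.scaleR)
  ultimately obtain p where "f p = 0" and orth: "\<And>m. f m = 0 \<Longrightarrow> cinner (x0 - p) m = 0"
    using orthogonal_projection_exists [of ?K x0] f_scaleC by auto
  define w where "w = x0 - p"
  have "f w \<noteq> 0"
    using \<open>f x0 \<noteq> 0\<close> \<open>f p = 0\<close> by (simp add: w_def f.diff)
  then have "cinner w w \<noteq> 0"
    by (auto simp: cinner_self_eq_norm)
  \<comment> \<open>\<open>w\<close> is orthogonal to the kernel, which contains \<open>f x \<cdot> w - f w \<cdot> x\<close>\<close>
  have "f x = cinner (scaleC (cnj (f w / cinner w w)) w) x" for x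
  proof -
    have "f (scaleC (f x) w - scaleC (f w) x) = 0"
      by (simp add: f.diff f_scaleC mult.commute)
    then have "cinner w (scaleC (f x) w - scaleC (f w) x) = 0"
      using orth by (simp add: w_def)
    then have "f x * cinner w w = f w * cinner w x"
      by (simp add: cinner_diff_right cinner_scaleC_right)
    with \<open>cinner w w \<noteq> 0\<close> show ?thesis
      by (simp add: cinner_scaleC_left field_simps)
  qed
  then show ?thesis
    by blast
qed (auto intro: exI [of _ 0])

lemma adjoint_op_eq:
  fixes X :: "'a::chilbert \<Rightarrow> 'a"
  assumes "bounded_clinear X"
  shows "cinner (X x) y = cinner x (adjoint_op X y)"
proof -
  have "\<exists>z. \<forall>x. cinner y (X x) = cinner z x" for y
    using assms
    by (intro riesz_representation bounded_linear_compose [OF bounded_linear_cinner_right])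
      (simp_all add: bounded_clinear_def cinner_scaleC_right)
  then obtain Y where Y: "\<And>x y. cinner (X x) y = cinner x (Y y)"
    by (metis cinner_commute)
  have "adjoint_op X = Y"
    unfolding adjoint_op_def
  proof (rule the_equality)
    fix Y'
    assume "\<forall>x y. cinner (X x) y = cinner x (Y' y)"
    then show "Y' = Y"
      using Y by (metis cinner_commute cinner_eqI ext)
  qed (use Y in blast)
  then show ?thesis
    using Y by simp
qed

section \<open>Positive operators\<close>

lemma bounded_clinear_linear: "bounded_clinear X \<Longrightarrow> linear X"
  by (simp add: bounded_clinear_def bounded_linear.linear)

lemma bounded_clinear_scaleC: "bounded_clinear X \<Longrightarrow> X (scaleC c x) = scaleC c (X x)"
  by (simp add: bounded_clinear_def)

lemma bounded_clinear_add: "bounded_clinear X \<Longrightarrow> X (x + y) = X x + X y"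
  by (simp add: bounded_clinear_linear linear_add)

lemma bounded_clinear_diff: "bounded_clinear X \<Longrightarrow> X (x - y) = X x - X y"
  by (simp add: bounded_clinear_linear linear_diff)

lemma bounded_clinear_scaleR: "bounded_clinear X \<Longrightarrow> X (r *\<^sub>R x) = r *\<^sub>R X x"
  by (simp add: bounded_clinear_linear linear_scale)

lemma bounded_clinear_zero: "bounded_clinear X \<Longrightarrow> X 0 = 0"
  by (simp add: bounded_clinear_linear linear_0)

lemma bounded_clinear_ident: "bounded_clinear (\<lambda>x. x)"
  by (simp add: bounded_clinear_def bounded_linear_ident)

lemma bounded_clinear_compose:
  "bounded_clinear X \<Longrightarrow> bounded_clinear Y \<Longrightarrow> bounded_clinear (\<lambda>x. X (Y x))"
  by (auto simp: bounded_clinear_def intro: bounded_linear_compose)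

lemma bounded_clinear_funpow: "bounded_clinear X \<Longrightarrow> bounded_clinear (X ^^ n)"
  by (induction n) (simp_all add: bounded_clinear_ident id_def comp_def bounded_clinear_compose)

lemma positive_op_inner_nonneg: "positive_op A \<Longrightarrow> 0 \<le> inner (A x) x"
  by (simp add: positive_op_def flip: Re_cinner)

lemma positive_op_hermitian:
  assumes "bounded_clinear A" and "positive_op A"
  shows "cinner (A x) y = cinner x (A y)"
proof -
  have real: "Im (cinner (A u) u) = 0" for u
    using \<open>positive_op A\<close> by (simp add: positive_op_def)
  \<comment> \<open>polarization along \<open>x + y\<close> and \<open>x + \<i> y\<close>\<close>
  have "Im (cinner (A x) y) + Im (cinner (A y) x) = 0"
    using real [of "x + y"] real [of x] real [of y]
    by (simp add: bounded_clinear_add [OF assms(1)] cinner_add_left cinner_add_right)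
  moreover have "Re (cinner (A x) y) - Re (cinner (A y) x) = 0"
    using real [of "x + scaleC \<i> y"] real [of x] real [of y]
    by (simp add: bounded_clinear_add [OF assms(1)] bounded_clinear_scaleC [OF assms(1)]
        cinner_add_left cinner_add_right cinner_scaleC_left cinner_scaleC_right)
  ultimately have "cinner (A x) y = cnj (cinner (A y) x)"
    by (simp add: complex_eq_iff)
  then show ?thesis
    by (metis cinner_commute)
qed

lemma positive_op_cauchy_schwarz:
  assumes "bounded_clinear A" and "positive_op A"
  shows "(inner (A x) y)\<^sup>2 \<le> inner (A x) x * inner (A y) y"
proof (rule nonneg_quadratic_discriminant)
  show "0 \<le> inner (A y) y"
    using assms(2) by (rule positive_op_inner_nonneg)
  have symmetric: "inner (A y) x = inner (A x) y"
    using positive_op_hermitian [OF assms, of y x] Re_cinner inner_commute by metis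
  fix t
  have "0 \<le> inner (A (x + t *\<^sub>R y)) (x + t *\<^sub>R y)"
    using assms(2) by (rule positive_op_inner_nonneg)
  then show "0 \<le> inner (A x) x + 2 * t * inner (A x) y + t\<^sup>2 * inner (A y) y"
    by (simp add: bounded_clinear_add [OF assms(1)] bounded_clinear_scaleR [OF assms(1)]
        inner_add_left inner_add_right symmetric power2_eq_square algebra_simps)
qed

lemma positive_op_inner_eq_zero:
  assumes "bounded_clinear A" and "positive_op A" and "inner (A y) y = 0"
  shows "A y = 0"
  using positive_op_cauchy_schwarz [OF assms(1,2), of y "A y"] assms(3) by simp

lemma positive_op_norm_le:
  assumes "bounded_clinear A" and "positive_op A" and le: "\<And>x. inner (A x) x \<le> (norm x)\<^sup>2"
  shows "norm (A x) \<le> norm x"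
proof -
  have "((norm (A x))\<^sup>2)\<^sup>2 \<le> inner (A x) x * inner (A (A x)) (A x)"
    using positive_op_cauchy_schwarz [OF assms(1,2), of x "A x"] by (simp add: power2_norm_eq_inner)
  also have "\<dots> \<le> (norm x)\<^sup>2 * (norm (A x))\<^sup>2"
    using assms(2) by (intro mult_mono le positive_op_inner_nonneg) simp_all
  finally have "(norm (A x))\<^sup>2 * (norm (A x))\<^sup>2 \<le> (norm x)\<^sup>2 * (norm (A x))\<^sup>2"
    by (simp only: power2_eq_square [of "(norm (A x))\<^sup>2"])
  then have "(norm (A x))\<^sup>2 \<le> (norm x)\<^sup>2 \<or> A x = 0"
    by (metis mult_right_le_imp_le norm_eq_zero zero_less_power2)
  then show ?thesis
    by (auto intro: power2_le_imp_le)
qed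

section \<open>The square root of a positive operator\<close>

lemma sum_convolution_eq:
  fixes a b :: "nat \<Rightarrow> 'a::comm_semiring_0"
  shows "(\<Sum>k<n. \<Sum>i\<le>k. a i * b (k - i)) = (\<Sum>i<n. a i * (\<Sum>j<n - i. b j))"
proof -
  have "{(i, j). i + j < n} = (SIGMA i:{..<n}. {..<n - i})"
    by auto
  then show ?thesis
    using sum.triangle_reindex [of "\<lambda>i j. a i * b j" n]
    by (simp add: sum.Sigma [symmetric] sum_distrib_left)
qed

text \<open>The Taylor coefficients of \<open>1 - sqrt (1 - z)\<close>: writing \<open>s(z)\<close> for this series,
  \<open>(1 - s(z))\<^sup>2 = 1 - z\<close> means \<open>s(z)\<^sup>2 = 2 s(z) - z\<close>, which is the recursion below.\<close>

function sqrt_coeff :: "nat \<Rightarrow> real" where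
  "sqrt_coeff n = (if n = 0 then 0 else if n = 1 then 1/2
     else (\<Sum>j\<in>{1..<n}. sqrt_coeff j * sqrt_coeff (n - j)) / 2)"
  by pat_completeness auto
termination
  by (relation "Wellfounded.measure id") auto

declare sqrt_coeff.simps [simp del]

lemma sqrt_coeff_0 [simp]: "sqrt_coeff 0 = 0"
  by (simp add: sqrt_coeff.simps)

lemma sqrt_coeff_1 [simp]: "sqrt_coeff (Suc 0) = 1/2"
  by (simp add: sqrt_coeff.simps)

lemma sqrt_coeff_nonneg: "0 \<le> sqrt_coeff n"
proof (induction n rule: less_induct)
  case (less n)
  then show ?case
    by (subst sqrt_coeff.simps) (auto intro!: sum_nonneg mult_nonneg_nonneg)
qed

lemma sqrt_coeff_convolution:
  "(\<Sum>i\<le>n. sqrt_coeff i * sqrt_coeff (n - i)) = 2 * sqrt_coeff n - (if n = 1 then 1 else 0)"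
proof (cases "n \<le> 1")
  case True
  then consider "n = 0" | "n = 1"
    by linarith
  then show ?thesis
    by cases simp_all
next
  case False
  \<comment> \<open>the terms \<open>i = 0\<close> and \<open>i = n\<close> vanish since \<open>sqrt_coeff 0 = 0\<close>\<close>
  have "(\<Sum>i\<le>n. sqrt_coeff i * sqrt_coeff (n - i)) = (\<Sum>i\<in>{1..<n}. sqrt_coeff i * sqrt_coeff (n - i))"
    by (rule sum.mono_neutral_right) (auto simp: Suc_le_eq)
  also have "\<dots> = 2 * sqrt_coeff n"
    using False by (subst (2) sqrt_coeff.simps) simp
  finally show ?thesis
    using False by simp
qed

lemma sqrt_coeff_partial_sum_le: "(\<Sum>k<N. sqrt_coeff k) \<le> 1"
proof (induction N)
  case (Suc N)
  let ?s = "\<lambda>N. \<Sum>k<N. sqrt_coeff k"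
  have "2 * ?s (Suc N) - 1 \<le> (\<Sum>k<Suc N. 2 * sqrt_coeff k - (if k = 1 then 1 else 0))"
    by (auto simp: sum_subtractf sum_distrib_left [symmetric])
  also have "\<dots> = (\<Sum>k<Suc N. \<Sum>i\<le>k. sqrt_coeff i * sqrt_coeff (k - i))"
    by (simp only: sqrt_coeff_convolution)
  also have "\<dots> = (\<Sum>i<Suc N. sqrt_coeff i * ?s (Suc N - i))"
    by (rule sum_convolution_eq)
  also have "\<dots> \<le> (\<Sum>i<Suc N. sqrt_coeff i * ?s N)"
  proof (rule sum_mono)
    fix i
    assume "i \<in> {..<Suc N}"
    show "sqrt_coeff i * ?s (Suc N - i) \<le> sqrt_coeff i * ?s N"
      by (cases i) (auto intro!: mult_left_mono sum_mono2 sqrt_coeff_nonneg)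
  qed
  also have "\<dots> = ?s (Suc N) * ?s N"
    by (simp only: sum_distrib_right)
  also have "\<dots> \<le> ?s (Suc N)"
    using Suc.IH by (intro mult_left_le sum_nonneg sqrt_coeff_nonneg)
  finally show ?case
    by linarith
qed simp

lemma summable_sqrt_coeff: "summable sqrt_coeff"
  by (rule summableI_nonneg_bounded [OF sqrt_coeff_nonneg sqrt_coeff_partial_sum_le])

lemma suminf_sqrt_coeff_le: "suminf sqrt_coeff \<le> 1"
  by (rule suminf_le_const [OF summable_sqrt_coeff sqrt_coeff_partial_sum_le])

lemma bounded_linear_funpow:
  fixes B :: "'a::real_normed_vector \<Rightarrow> 'a"
  shows "bounded_linear B \<Longrightarrow> bounded_linear (B ^^ n)"
  by (induction n) (simp_all add: id_def comp_def bounded_linear_ident bounded_linear_compose)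

lemma norm_funpow_le:
  fixes B :: "'a::real_normed_vector \<Rightarrow> 'a"
  assumes "\<And>y. norm (B y) \<le> norm y"
  shows "norm ((B ^^ n) y) \<le> norm y"
  by (induction n) (auto intro: order_trans [OF assms])

lemma summable_contraction_power_series:
  fixes B :: "'a::banach \<Rightarrow> 'a"
  assumes "\<And>y. norm (B y) \<le> norm y" and "\<And>k. 0 \<le> a k" and "summable a"
  shows "summable (\<lambda>k. a k *\<^sub>R (B ^^ k) y)"
proof (rule summable_comparison_test)
  show "\<exists>N. \<forall>n\<ge>N. norm (a n *\<^sub>R (B ^^ n) y) \<le> a n * norm y"
    using assms(2) norm_funpow_le [OF assms(1)] by (auto intro!: mult_left_mono)
  show "summable (\<lambda>n. a n * norm y)"
    using \<open>summable a\<close> by (rule summable_mult2)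
qed

lemma Cauchy_product_square_minus_triangle:
  fixes a :: "nat \<Rightarrow> real"
  assumes "\<And>k. 0 \<le> a k" and "summable a"
  shows "(\<lambda>N. (\<Sum>i<N. a i) * (\<Sum>j<N. a j) - (\<Sum>n<N. \<Sum>i\<le>n. a i * a (n - i))) \<longlonglongrightarrow> 0"
proof -
  have "(\<lambda>n. \<Sum>i\<le>n. a i * a (n - i)) sums (suminf a * suminf a)"
    using assms by (intro Cauchy_product_sums) simp_all
  then have "(\<lambda>N. \<Sum>n<N. \<Sum>i\<le>n. a i * a (n - i)) \<longlonglongrightarrow> suminf a * suminf a"
    by (simp add: sums_def)
  moreover have "(\<lambda>N. (\<Sum>i<N. a i) * (\<Sum>j<N. a j)) \<longlonglongrightarrow> suminf a * suminf a"
    using \<open>summable a\<close> by (intro tendsto_mult summable_LIMSEQ)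
  ultimately show ?thesis
    using tendsto_diff by fastforce
qed

lemma norm_power_series_square_minus_Cauchy_le:
  fixes B :: "'a::real_normed_vector \<Rightarrow> 'a" and a :: "nat \<Rightarrow> real"
  assumes "bounded_linear B" and contraction: "\<And>y. norm (B y) \<le> norm y"
    and a_nonneg: "\<And>k. 0 \<le> a k"
  shows "norm ((\<Sum>i<N. a i *\<^sub>R (B ^^ i) (\<Sum>j<N. a j *\<^sub>R (B ^^ j) x))
      - (\<Sum>n<N. (\<Sum>i\<le>n. a i * a (n - i)) *\<^sub>R (B ^^ n) x))
    \<le> ((\<Sum>i<N. a i) * (\<Sum>j<N. a j) - (\<Sum>n<N. \<Sum>i\<le>n. a i * a (n - i))) * norm x"
proof -
  define g where "g = (\<lambda>(i, j). (a i * a j) *\<^sub>R (B ^^ (i + j)) x)"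
  let ?square = "{..<N} \<times> {..<N}" and ?triangle = "{(i, j). i + j < N}"
  have "?triangle \<subseteq> ?square" and "finite ?square"
    by auto
  have linear_pow: "linear (B ^^ k)" for k
    using bounded_linear_funpow [OF \<open>bounded_linear B\<close>] by (rule bounded_linear.linear)
  have "(\<Sum>i<N. a i *\<^sub>R (B ^^ i) (\<Sum>j<N. a j *\<^sub>R (B ^^ j) x)) = sum g ?square"
    by (simp add: g_def linear_sum [OF linear_pow] linear_scale [OF linear_pow]
        scaleR_sum_right funpow_add sum.cartesian_product)
  moreover have "(\<Sum>n<N. (\<Sum>i\<le>n. a i * a (n - i)) *\<^sub>R (B ^^ n) x) = sum g ?triangle"
    by (simp add: g_def sum.triangle_reindex scaleR_sum_left)
  moreover have "norm (g p) \<le> (\<lambda>(i, j). a i * a j) p * norm x" for p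
    using a_nonneg norm_funpow_le [OF contraction]
    by (auto simp: g_def abs_mult intro!: mult_left_mono split: prod.split)
  ultimately have "norm ((\<Sum>i<N. a i *\<^sub>R (B ^^ i) (\<Sum>j<N. a j *\<^sub>R (B ^^ j) x))
      - (\<Sum>n<N. (\<Sum>i\<le>n. a i * a (n - i)) *\<^sub>R (B ^^ n) x))
    \<le> (\<Sum>p\<in>?square - ?triangle. (\<lambda>(i, j). a i * a j) p * norm x)"
    using \<open>?triangle \<subseteq> ?square\<close> \<open>finite ?square\<close>
    by (simp add: sum_diff [symmetric] finite_subset sum_norm_le)
  also have "\<dots> = ((\<Sum>i<N. a i) * (\<Sum>j<N. a j) - (\<Sum>n<N. \<Sum>i\<le>n. a i * a (n - i))) * norm x"
    using \<open>?triangle \<subseteq> ?square\<close> \<open>finite ?square\<close>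
    by (simp add: sum_distrib_right [symmetric] sum_diff finite_subset sum_product
        sum.cartesian_product sum.triangle_reindex)
  finally show ?thesis .
qed

lemma contraction_power_series_Cauchy_product:
  fixes B :: "'a::banach \<Rightarrow> 'a" and a :: "nat \<Rightarrow> real"
  assumes "bounded_linear B" and contraction: "\<And>y. norm (B y) \<le> norm y"
    and a_nonneg: "\<And>k. 0 \<le> a k" and "summable a"
  shows "(\<lambda>n. (\<Sum>i\<le>n. a i * a (n - i)) *\<^sub>R (B ^^ n) x)
    sums (\<Sum>j. a j *\<^sub>R (B ^^ j) (\<Sum>k. a k *\<^sub>R (B ^^ k) x))"
proof -
  define U where "U N y = (\<Sum>i<N. a i *\<^sub>R (B ^^ i) y)" for N y
  define S where "S = (\<Sum>k. a k *\<^sub>R (B ^^ k) x)"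
  define T where "T = (\<Sum>j. a j *\<^sub>R (B ^^ j) S)"
  have summable: "summable (\<lambda>k. a k *\<^sub>R (B ^^ k) y)" for y
    using contraction a_nonneg \<open>summable a\<close> by (rule summable_contraction_power_series)
  have "norm (U N y) \<le> suminf a * norm y" for N y
  proof -
    have "norm (U N y) \<le> (\<Sum>i<N. a i * norm y)"
      unfolding U_def using a_nonneg norm_funpow_le [OF contraction]
      by (intro sum_norm_le) (auto intro: mult_left_mono)
    also have "\<dots> \<le> suminf a * norm y"
      using a_nonneg \<open>summable a\<close>
      by (auto simp: sum_distrib_right [symmetric] intro!: mult_right_mono sum_le_suminf)
    finally show ?thesis .
  qed
  then have "(\<lambda>N. U N (U N x - S)) \<longlonglongrightarrow> 0"
  proof (rule Lim_null_comparison [OF always_eventually, OF allI])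
    have "(\<lambda>N. U N x) \<longlonglongrightarrow> S"
      unfolding U_def S_def using summable by (rule summable_LIMSEQ)
    then show "(\<lambda>N. suminf a * norm (U N x - S)) \<longlonglongrightarrow> 0"
      by (intro tendsto_mult_right_zero tendsto_norm_zero LIM_zero)
  qed
  \<comment> \<open>\<open>U N (U N x)\<close> converges to \<open>T\<close>, and it differs from the partial sums of the Cauchy
    product by a term controlled by the scalar Cauchy product of \<open>a\<close>\<close>
  moreover have "(\<lambda>N. U N S) \<longlonglongrightarrow> T"
    unfolding U_def T_def using summable by (rule summable_LIMSEQ)
  moreover have "U N (U N x) = U N (U N x - S) + U N S" for N
    using bounded_linear.linear [OF bounded_linear_funpow [OF \<open>bounded_linear B\<close>]]
    by (simp add: U_def linear_diff sum_subtractf scaleR_diff_right)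
  ultimately have "(\<lambda>N. U N (U N x)) \<longlonglongrightarrow> T"
    using tendsto_add by fastforce
  moreover have "(\<lambda>N. U N (U N x) - (\<Sum>n<N. (\<Sum>i\<le>n. a i * a (n - i)) *\<^sub>R (B ^^ n) x)) \<longlonglongrightarrow> 0"
  proof (rule Lim_null_comparison [OF always_eventually, OF allI])
    show "norm (U N (U N x) - (\<Sum>n<N. (\<Sum>i\<le>n. a i * a (n - i)) *\<^sub>R (B ^^ n) x))
      \<le> ((\<Sum>i<N. a i) * (\<Sum>j<N. a j) - (\<Sum>n<N. \<Sum>i\<le>n. a i * a (n - i))) * norm x" for N
      unfolding U_def using \<open>bounded_linear B\<close> contraction a_nonneg
      by (rule norm_power_series_square_minus_Cauchy_le)
    show "(\<lambda>N. ((\<Sum>i<N. a i) * (\<Sum>j<N. a j) - (\<Sum>n<N. \<Sum>i\<le>n. a i * a (n - i))) * norm x)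
      \<longlonglongrightarrow> 0"
      using a_nonneg \<open>summable a\<close>
      by (intro tendsto_mult_left_zero Cauchy_product_square_minus_triangle)
  qed
  ultimately have "(\<lambda>N. \<Sum>n<N. (\<Sum>i\<le>n. a i * a (n - i)) *\<^sub>R (B ^^ n) x) \<longlonglongrightarrow> T"
    using tendsto_diff by fastforce
  then show ?thesis
    by (simp add: sums_def T_def S_def)
qed

locale positive_operator =
  fixes A :: "'a::chilbert \<Rightarrow> 'a"
  assumes bounded_clinear_A: "bounded_clinear A" and positive_A: "positive_op A"
begin

lemma hermitian: "cinner (A x) y = cinner x (A y)"
  by (rule positive_op_hermitian [OF bounded_clinear_A positive_A])

end

text \<open>With \<open>K \<ge> \<parallel>A\<parallel>\<close>, \<open>B = I - A / K\<close> satisfies \<open>0 \<le> B \<le> I\<close>, so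
  \<open>sqrt (A / K) = sqrt (I - B) = I - \<Sum>k. sqrt_coeff k B\<^sup>k\<close> converges.\<close>

locale sqrt_construction = positive_operator +
  fixes K :: real
  assumes K_pos: "0 < K" and norm_A_le: "\<And>x. norm (A x) \<le> norm x * K"
begin

definition B :: "'a \<Rightarrow> 'a" where "B x = x - (1 / K) *\<^sub>R A x"

definition P :: "'a \<Rightarrow> 'a" where "P x = (\<Sum>k. sqrt_coeff k *\<^sub>R (B ^^ k) x)"

definition R :: "'a \<Rightarrow> 'a" where "R x = sqrt K *\<^sub>R (x - P x)"

lemma bounded_clinear_B: "bounded_clinear B"
proof -
  have "bounded_linear (\<lambda>x. x - (1 / K) *\<^sub>R A x)"
    using bounded_clinear_A unfolding bounded_clinear_def
    by (intro bounded_linear_sub bounded_linear_ident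
        bounded_linear_compose [OF bounded_linear_scaleR_right]) auto
  then show ?thesis
    by (simp add: bounded_clinear_def B_def [abs_def] bounded_clinear_scaleC [OF bounded_clinear_A]
        scaleC_diff_right scaleC_scaleR_commute)
qed

lemma inner_B: "inner (B x) x = (norm x)\<^sup>2 - (1 / K) * inner (A x) x"
  by (simp add: B_def inner_diff_left power2_norm_eq_inner)

lemma positive_B: "positive_op B"
  unfolding positive_op_def
proof (intro allI conjI)
  fix x
  show "Im (cinner (B x) x) = 0"
    using positive_A by (simp add: B_def cinner_diff_left cinner_scaleR_left Im_cinner_self
        positive_op_def)
  have "inner (A x) x \<le> norm x * K * norm x"
    using norm_cauchy_schwarz [of "A x" x] norm_A_le [of x] by (metis mult_right_mono norm_ge_zero order_trans)
  then have "(1 / K) * inner (A x) x \<le> (norm x)\<^sup>2"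
    using K_pos by (simp add: field_simps power2_eq_square)
  then show "0 \<le> Re (cinner (B x) x)"
    by (simp add: Re_cinner inner_B)
qed

lemma norm_B_le: "norm (B x) \<le> norm x"
  using bounded_clinear_B positive_B
proof (rule positive_op_norm_le)
  show "inner (B x) x \<le> (norm x)\<^sup>2" for x
    using positive_op_inner_nonneg [OF positive_A] K_pos by (simp add: inner_B)
qed

lemma hermitian_B_power: "cinner ((B ^^ k) x) y = cinner x ((B ^^ k) y)"
proof (induction k arbitrary: y)
  case (Suc k)
  have "cinner ((B ^^ Suc k) x) y = cinner ((B ^^ k) x) (B y)"
    by (simp add: positive_op_hermitian [OF bounded_clinear_B positive_B])
  also have "\<dots> = cinner x ((B ^^ Suc k) y)"
    by (simp add: Suc funpow_swap1)
  finally show ?case .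
qed simp

lemma P_sums: "(\<lambda>k. sqrt_coeff k *\<^sub>R (B ^^ k) x) sums P x"
  unfolding P_def using norm_B_le sqrt_coeff_nonneg summable_sqrt_coeff
  by (intro summable_sums summable_contraction_power_series)

lemma bounded_clinear_P: "bounded_clinear P"
proof -
  have linear_pow: "bounded_clinear (B ^^ k)" for k
    using bounded_clinear_B by (rule bounded_clinear_funpow)
  have "bounded_linear P"
  proof (rule bounded_linear_intro [of _ 1])
    show "P (x + y) = P x + P y" for x y
      using sums_add [OF P_sums P_sums, of x y] P_sums [of "x + y"]
      by (simp add: bounded_clinear_add [OF linear_pow] scaleR_add_right sums_unique2)
    show "P (r *\<^sub>R x) = r *\<^sub>R P x" for r x
      using sums_scaleR_right [OF P_sums, of r x] P_sums [of "r *\<^sub>R x"]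
      by (simp add: bounded_clinear_scaleR [OF linear_pow] sums_unique2 mult.commute)
    show "norm (P x) \<le> norm x * 1" for x
    proof -
      have "norm (P x) \<le> (\<Sum>k. sqrt_coeff k * norm x)"
        unfolding P_def using P_sums sqrt_coeff_nonneg norm_funpow_le [OF norm_B_le]
        by (intro norm_suminf_le summable_mult2 summable_sqrt_coeff)
          (auto simp: sums_iff intro: mult_left_mono)
      also have "\<dots> \<le> norm x"
        using suminf_sqrt_coeff_le suminf_nonneg [OF summable_sqrt_coeff sqrt_coeff_nonneg]
        by (simp add: suminf_mult2 [OF summable_sqrt_coeff, symmetric] mult_left_le_one_le)
      finally show ?thesis by simp
    qed
  qed
  moreover have "P (scaleC c x) = scaleC c (P x)" for c x
    using bounded_linear.sums [OF bounded_linear_scaleC P_sums, of c x] P_sums [of "scaleC c x"]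
    by (simp add: bounded_clinear_scaleC [OF linear_pow] scaleC_scaleR_commute sums_unique2)
  ultimately show ?thesis
    by (simp add: bounded_clinear_def)
qed

lemma P_square: "P (P x) = 2 *\<^sub>R P x - B x"
proof -
  have "(\<lambda>n. (\<Sum>i\<le>n. sqrt_coeff i * sqrt_coeff (n - i)) *\<^sub>R (B ^^ n) x) sums P (P x)"
    using contraction_power_series_Cauchy_product [OF _ norm_B_le sqrt_coeff_nonneg summable_sqrt_coeff]
      bounded_clinear_B by (simp add: bounded_clinear_def P_def)
  moreover have "(\<lambda>n. 2 *\<^sub>R (sqrt_coeff n *\<^sub>R (B ^^ n) x) - (if n = 1 then (B ^^ n) x else 0))
    sums (2 *\<^sub>R P x - (B ^^ 1) x)"
    by (intro sums_diff sums_scaleR_right P_sums sums_single)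
  ultimately show ?thesis
    by (simp add: sqrt_coeff_convolution scaleR_diff_left sums_unique2 if_distrib [of "\<lambda>t. t *\<^sub>R _"]
        cong: if_cong)
qed

lemma bounded_clinear_R: "bounded_clinear R"
  using bounded_clinear_P unfolding R_def [abs_def] bounded_clinear_def
  by (auto intro!: bounded_linear_compose [OF bounded_linear_scaleR_right] bounded_linear_sub
      bounded_linear_ident simp: scaleC_diff_right scaleC_scaleR_commute)

lemma R_square: "R (R x) = A x"
proof -
  have "x - P x - P (x - P x) = (1 / K) *\<^sub>R A x"
    by (simp add: bounded_clinear_diff [OF bounded_clinear_P] P_square B_def scaleR_2 algebra_simps)
  then show ?thesis
    using K_pos by (simp add: R_def bounded_clinear_scaleR [OF bounded_clinear_P]
        bounded_clinear_diff [OF bounded_clinear_P] flip: scaleR_right_diff_distrib)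
qed

lemma cinner_P_self: "Im (cinner (P x) x) = 0" "Re (cinner (P x) x) \<le> (norm x)\<^sup>2"
proof -
  have "(\<lambda>k. of_real (sqrt_coeff k) * cinner ((B ^^ k) x) x) sums cinner (P x) x"
    using bounded_linear.sums [OF bounded_linear_cinner_left P_sums, of x x]
    by (simp add: cinner_scaleR_left)
  then have Re_sums: "(\<lambda>k. sqrt_coeff k * inner ((B ^^ k) x) x) sums Re (cinner (P x) x)"
    and Im_sums: "(\<lambda>k. sqrt_coeff k * Im (cinner ((B ^^ k) x) x)) sums Im (cinner (P x) x)"
    by (simp_all add: sums_complex_iff Re_cinner)
  have "cinner ((B ^^ k) x) x = cnj (cinner ((B ^^ k) x) x)" for k
    using hermitian_B_power [of k x x] cinner_commute [of x "(B ^^ k) x"] by simp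
  then have "Im (cinner ((B ^^ k) x) x) = 0" for k
    by (simp add: complex_eq_iff)
  with Im_sums have "(\<lambda>k. 0) sums Im (cinner (P x) x)"
    by simp
  then show "Im (cinner (P x) x) = 0"
    using sums_zero sums_unique2 by blast
  have "inner ((B ^^ k) x) x \<le> (norm x)\<^sup>2" for k
  proof -
    have "inner ((B ^^ k) x) x \<le> norm ((B ^^ k) x) * norm x"
      by (rule norm_cauchy_schwarz)
    also have "\<dots> \<le> (norm x)\<^sup>2"
      using norm_funpow_le [OF norm_B_le, of k x] by (simp add: power2_eq_square mult_right_mono)
    finally show ?thesis .
  qed
  then have "Re (cinner (P x) x) \<le> suminf sqrt_coeff * (norm x)\<^sup>2"
    using Re_sums by (rule sums_le [OF mult_left_mono [OF _ sqrt_coeff_nonneg]])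
      (intro sums_mult2 summable_sums summable_sqrt_coeff)
  also have "\<dots> \<le> (norm x)\<^sup>2"
    using suminf_sqrt_coeff_le suminf_nonneg [OF summable_sqrt_coeff sqrt_coeff_nonneg]
    by (simp add: mult_left_le_one_le)
  finally show "Re (cinner (P x) x) \<le> (norm x)\<^sup>2" .
qed

lemma positive_R: "positive_op R"
  using cinner_P_self K_pos
  by (simp add: positive_op_def R_def cinner_scaleR_left cinner_diff_left Im_cinner_self
      cinner_self_eq_norm)

lemma commute_R:
  assumes "bounded_clinear Q" and commute_A: "\<And>x. Q (A x) = A (Q x)"
  shows "Q (R x) = R (Q x)"
proof -
  have "Q (B x) = B (Q x)" for x
    by (simp add: B_def bounded_clinear_diff [OF assms(1)] bounded_clinear_scaleR [OF assms(1)]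
        commute_A)
  then have commute_B_power: "Q ((B ^^ k) x) = (B ^^ k) (Q x)" for k x
    by (induction k) simp_all
  have "bounded_linear Q"
    using assms(1) by (simp add: bounded_clinear_def)
  then have "(\<lambda>k. Q (sqrt_coeff k *\<^sub>R (B ^^ k) x)) sums Q (P x)"
    by (rule bounded_linear.sums [OF _ P_sums])
  then have "Q (P x) = P (Q x)"
    using P_sums [of "Q x"]
    by (simp add: bounded_clinear_scaleR [OF assms(1)] commute_B_power sums_unique2)
  then show ?thesis
    by (simp add: R_def bounded_clinear_scaleR [OF assms(1)] bounded_clinear_diff [OF assms(1)])
qed

lemma sqrt_unique:
  assumes "bounded_clinear R'" and "positive_op R'" and square: "\<And>x. R' (R' x) = A x"
  shows "R' = R"
proof
  fix x
  define y where "y = R x - R' x"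
  have "R' (A z) = A (R' z)" for z
    by (simp only: square [symmetric])
  with assms(1) have "R' (R x) = R (R' x)"
    by (rule commute_R)
  then have "R y + R' y = 0"
    unfolding y_def bounded_clinear_diff [OF bounded_clinear_R] bounded_clinear_diff [OF assms(1)]
      R_square square by simp
  then have "cinner (R y) y + cinner (R' y) y = 0"
    using cinner_add_left [of "R y" "R' y" y] by simp
  then have "inner (R y) y + inner (R' y) y = 0"
    by (metis Re_cinner plus_complex.sel(1) zero_complex.sel(1))
  moreover have "0 \<le> inner (R y) y" and "0 \<le> inner (R' y) y"
    using positive_R assms(2) by (simp_all add: positive_op_inner_nonneg)
  ultimately have "R y = 0" and "R' y = 0"
    using positive_op_inner_eq_zero [OF bounded_clinear_R positive_R, of y]
      positive_op_inner_eq_zero [OF assms(1,2), of y] by simp_all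
  then have "cinner y y = 0"
    by (simp add: y_def cinner_diff_left positive_op_hermitian [OF bounded_clinear_R positive_R]
        positive_op_hermitian [OF assms(1,2)])
  then show "R' x = R x"
    by (simp add: y_def cinner_self_eq_norm)
qed

end

context positive_operator
begin

lemma op_sqrt_spec:
  "bounded_clinear (op_sqrt A) \<and> positive_op (op_sqrt A) \<and> (\<forall>x. op_sqrt A (op_sqrt A x) = A x)"
proof -
  obtain K where "0 < K" and "\<And>x. norm (A x) \<le> norm x * K"
    using bounded_linear.pos_bounded [of A] bounded_clinear_A by (auto simp: bounded_clinear_def)
  then interpret sqrt_construction A K
    by unfold_locales
  have "op_sqrt A = R"
    unfolding op_sqrt_def
  proof (rule the_equality)
    fix R'
    assume "bounded_clinear R' \<and> positive_op R' \<and> (\<forall>x. R' (R' x) = A x)"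
    then show "R' = R"
      using sqrt_unique by blast
  qed (use bounded_clinear_R positive_R R_square in blast)
  then show ?thesis
    using bounded_clinear_R positive_R R_square by simp
qed

lemma A_norm_eq_norm_op_sqrt: "A_norm A x = norm (op_sqrt A x)"
proof -
  have "cinner (op_sqrt A (op_sqrt A x)) x = cinner (op_sqrt A x) (op_sqrt A x)"
    using op_sqrt_spec positive_op_hermitian by blast
  then show ?thesis
    using op_sqrt_spec by (simp add: A_norm_def cinner_self_eq_norm)
qed

end

section \<open>Operators in \<open>B_half A\<close> are bounded for the \<open>A\<close>-seminorm\<close>

lemma pointwise_bounded_imp_bounded_on_ball:
  fixes f :: "'i \<Rightarrow> 'a::{real_normed_vector,complete_space} \<Rightarrow> 'b::real_normed_vector"
  assumes cont: "\<And>i. i \<in> I \<Longrightarrow> continuous_on UNIV (f i)"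
    and bounded: "\<And>x. \<exists>M. \<forall>i\<in>I. norm (f i x) \<le> M"
  shows "\<exists>y r M. 0 < r \<and> (\<forall>i\<in>I. \<forall>x\<in>ball y r. norm (f i x) \<le> M)"
proof -
  define E where "E n = {x. \<forall>i\<in>I. norm (f i x) \<le> real n}" for n :: nat
  have closed_E: "closed (E n)" for n
  proof -
    have "E n = (\<Inter>i\<in>I. {x. norm (f i x) \<le> real n})"
      by (auto simp: E_def)
    then show ?thesis
      using cont by (auto intro!: closed_INT closed_Collect_le continuous_intros)
  qed
  have "UNIV = \<Union>(range E)"
  proof (rule UNIV_eq_I)
    fix x
    obtain M where "\<forall>i\<in>I. norm (f i x) \<le> M"
      using bounded by blast
    then have "x \<in> E (nat \<lceil>M\<rceil>)"
      by (auto simp: E_def intro: order_trans [OF _ real_nat_ceiling_ge])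
    then show "x \<in> \<Union>(range E)"
      by blast
  qed
  obtain n where "interior (E n) \<noteq> {}"
  proof (cases "\<exists>n. interior (E n) \<noteq> {}")
    case False
    have "euclidean interior_of \<Union>(range E) = {}"
    proof (rule Baire_category_alt)
      show "completely_metrizable_space (euclidean :: 'a topology) \<or>
          locally_compact_space (euclidean :: 'a topology) \<and> regular_space (euclidean :: 'a topology)"
        using completely_metrizable_space_euclidean by blast
      show "closedin euclidean T \<and> euclidean interior_of T = {}" if "T \<in> range E" for T
        using that closed_E False by auto
    qed simp
    with \<open>UNIV = \<Union>(range E)\<close> show ?thesis
      by simp
  qed blast
  then obtain y where "y \<in> interior (E n)"
    by blast
  then obtain r where "0 < r" "ball y r \<subseteq> interior (E n)"
    using open_contains_ball open_interior by blast
  then have "\<forall>i\<in>I. \<forall>x\<in>ball y r. norm (f i x) \<le> real n"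
    using interior_subset by (auto simp: E_def)
  with \<open>0 < r\<close> show ?thesis
    by blast
qed

lemma uniform_boundedness:
  fixes f :: "'i \<Rightarrow> 'a::banach \<Rightarrow> 'b::real_normed_vector"
  assumes linear: "\<And>i. i \<in> I \<Longrightarrow> bounded_linear (f i)"
    and bounded: "\<And>x. \<exists>M. \<forall>i\<in>I. norm (f i x) \<le> M"
  shows "\<exists>C\<ge>0. \<forall>i\<in>I. \<forall>x. norm (f i x) \<le> C * norm x"
proof -
  have "continuous_on UNIV (f i)" if "i \<in> I" for i
    using linear [OF that] by (rule linear_continuous_on)
  then have "\<exists>y r M. 0 < r \<and> (\<forall>i\<in>I. \<forall>x\<in>ball y r. norm (f i x) \<le> M)"
    using bounded by (rule pointwise_bounded_imp_bounded_on_ball)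
  then obtain y r M where "0 < r" and ball: "\<And>i x. i \<in> I \<Longrightarrow> x \<in> ball y r \<Longrightarrow> norm (f i x) \<le> M"
    by blast
  \<comment> \<open>translate the ball to the origin and rescale\<close>
  have "norm (f i x) \<le> (4 * \<bar>M\<bar> / r) * norm x" if "i \<in> I" for i x
  proof (cases "x = 0")
    case False
    interpret bounded_linear "f i"
      using linear that .
    define t where "t = r / (2 * norm x)"
    have "t > 0"
      using False \<open>0 < r\<close> by (simp add: t_def)
    have "norm (f i (t *\<^sub>R x)) \<le> 2 * \<bar>M\<bar>"
    proof -
      have "norm (t *\<^sub>R x) < r"
        using False \<open>0 < r\<close> by (simp add: t_def)
      then have "norm (f i (y + t *\<^sub>R x)) \<le> M" and "norm (f i y) \<le> M"
        using ball [OF that] \<open>0 < r\<close> by (simp_all add: dist_norm)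
      then show ?thesis
        using norm_triangle_ineq4 [of "f i (y + t *\<^sub>R x)" "f i y"] by (simp add: add)
    qed
    then have "t * norm (f i x) \<le> 2 * \<bar>M\<bar>"
      using \<open>t > 0\<close> by (simp add: scaleR)
    then show ?thesis
      using False \<open>0 < r\<close> by (simp add: t_def field_simps)
  qed (simp add: linear_0 [OF bounded_linear.linear [OF linear [OF that]]])
  moreover have "0 \<le> 4 * \<bar>M\<bar> / r"
    using \<open>0 < r\<close> by simp
  ultimately show ?thesis
    by blast
qed

lemma homogeneous_bound_from_unit_ball:
  fixes p q :: "'a::real_vector \<Rightarrow> real"
  assumes p_homogeneous: "\<And>t x. p (t *\<^sub>R x) = \<bar>t\<bar> * p x"
    and q_homogeneous: "\<And>t x. q (t *\<^sub>R x) = \<bar>t\<bar> * q x"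
    and unit_ball: "\<And>x. p x \<le> 1 \<Longrightarrow> q x \<le> C" and "0 \<le> p x"
  shows "q x \<le> C * p x"
proof (cases "p x = 0")
  case True
  have "q x \<le> 0"
  proof (rule ccontr)
    assume "\<not> q x \<le> 0"
    then have "q (((\<bar>C\<bar> + 1) / q x) *\<^sub>R x) = \<bar>C\<bar> + 1"
      by (simp add: q_homogeneous)
    moreover have "p (((\<bar>C\<bar> + 1) / q x) *\<^sub>R x) \<le> 1"
      using True by (simp add: p_homogeneous)
    ultimately show False
      using unit_ball by fastforce
  qed
  with True show ?thesis
    by simp
next
  case False
  with \<open>0 \<le> p x\<close> have "0 < p x"
    by simp
  then have "p ((1 / p x) *\<^sub>R x) \<le> 1"
    by (simp add: p_homogeneous)
  then have "q x / p x \<le> C"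
    using unit_ball \<open>0 < p x\<close> by (fastforce simp: q_homogeneous)
  with \<open>0 < p x\<close> show ?thesis
    by (simp add: pos_divide_le_eq)
qed

context positive_operator
begin

lemma A_norm_bound_if_B_half:
  assumes "X \<in> B_half A"
  shows "\<exists>c\<ge>0. \<forall>x. A_norm A (X x) \<le> c * A_norm A x"
proof -
  let ?R = "op_sqrt A"
  have X: "bounded_clinear X"
    using assms by (simp add: B_half_def)
  have R: "bounded_clinear ?R" and R_hermitian: "\<And>x y. cinner (?R x) y = cinner x (?R y)"
    using op_sqrt_spec positive_op_hermitian by blast+
  have "\<forall>y. \<exists>v. adjoint_op X (?R y) = ?R v"
    using assms unfolding B_half_def by blast
  then obtain z where z: "\<And>y. adjoint_op X (?R y) = ?R (z y)"
    by metis
  have adjoint: "cinner (?R (X w)) y = cinner (?R w) (z y)" for w y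
    by (simp add: R_hermitian adjoint_op_eq [OF X] z)
  \<comment> \<open>the adjoint turns the pointwise bound into a bound by \<open>norm (z y)\<close>\<close>
  have "\<exists>C\<ge>0. \<forall>w\<in>{w. norm (?R w) \<le> 1}. \<forall>y. norm (cinner (?R (X w)) y) \<le> C * norm y"
  proof (rule uniform_boundedness)
    show "bounded_linear (cinner (?R (X w)))" for w
      by (rule bounded_linear_cinner_right)
    show "\<exists>M. \<forall>w\<in>{w. norm (?R w) \<le> 1}. norm (cinner (?R (X w)) y) \<le> M" for y
    proof (intro exI ballI)
      fix w
      assume "w \<in> {w. norm (?R w) \<le> 1}"
      then show "norm (cinner (?R (X w)) y) \<le> norm (z y)"
        using cinner_cauchy_schwarz [of "?R w" "z y"] mult_right_mono [of "norm (?R w)" 1 "norm (z y)"]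
        by (simp add: adjoint)
    qed
  qed
  then obtain C where "0 \<le> C" and C: "\<And>w y. norm (?R w) \<le> 1 \<Longrightarrow> cmod (cinner (?R (X w)) y) \<le> C * norm y"
    by auto
  have "norm (?R (X w)) \<le> C" if "norm (?R w) \<le> 1" for w
  proof -
    have "norm (?R (X w)) * norm (?R (X w)) \<le> C * norm (?R (X w))"
      using C [OF that, of "?R (X w)"]
      by (simp only: cinner_self_eq_norm norm_of_real) (simp add: power2_eq_square)
    with \<open>0 \<le> C\<close> show ?thesis
      by (cases "?R (X w) = 0") (auto dest: mult_right_le_imp_le)
  qed
  then have "norm (?R (X x)) \<le> C * norm (?R x)" for x
    by (intro homogeneous_bound_from_unit_ball)
      (simp_all add: bounded_clinear_scaleR [OF R] bounded_clinear_scaleR [OF X])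
  with \<open>0 \<le> C\<close> show ?thesis
    by (auto simp: A_norm_eq_norm_op_sqrt)
qed

end

section \<open>The \<open>A\<close>-seminorm\<close>

lemma subspace_closure:
  fixes S :: "'a::real_normed_vector set"
  assumes "subspace S"
  shows "subspace (closure S)"
  unfolding subspace_def
proof (intro conjI ballI allI)
  show "0 \<in> closure S"
    using assms closure_subset subspace_0 by blast
  show "x + y \<in> closure S" if x: "x \<in> closure S" and y: "y \<in> closure S" for x y
  proof -
    obtain s t where "\<And>n. s n \<in> S" "s \<longlonglongrightarrow> x" "\<And>n. t n \<in> S" "t \<longlonglongrightarrow> y"
      using x y unfolding closure_sequential by blast
    moreover from this have "\<And>n. s n + t n \<in> S"
      using assms by (simp add: subspace_add)
    ultimately show ?thesis
      unfolding closure_sequential by (intro exI [of _ "\<lambda>n. s n + t n"]) (simp add: tendsto_add)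
  qed
  show "c *\<^sub>R x \<in> closure S" if x: "x \<in> closure S" for c x
  proof -
    obtain s where "\<And>n. s n \<in> S" "s \<longlonglongrightarrow> x"
      using x unfolding closure_sequential by blast
    moreover from this have "\<And>n. c *\<^sub>R s n \<in> S"
      using assms by (simp add: subspace_scale)
    ultimately show ?thesis
      unfolding closure_sequential by (intro exI [of _ "\<lambda>n. c *\<^sub>R s n"]) (simp add: tendsto_scaleR)
  qed
qed

definition A_bounded :: "('a::chilbert \<Rightarrow> 'a) \<Rightarrow> ('a \<Rightarrow> 'a) \<Rightarrow> bool" where
  "A_bounded A X \<longleftrightarrow> bounded_clinear X \<and> (\<exists>c\<ge>0. \<forall>x. A_norm A (X x) \<le> c * A_norm A x)"

context positive_operator
begin

lemma A_norm_nonneg: "0 \<le> A_norm A x"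
  using positive_A by (simp add: A_norm_def positive_op_def)

lemma A_norm_eq_zero_iff: "A_norm A x = 0 \<longleftrightarrow> A x = 0"
  using positive_op_inner_eq_zero [OF bounded_clinear_A positive_A, of x] positive_A
  by (auto simp: A_norm_def positive_op_def Re_cinner)

lemma A_norm_scaleR: "A_norm A (t *\<^sub>R x) = \<bar>t\<bar> * A_norm A x"
  by (simp add: A_norm_def bounded_clinear_scaleR [OF bounded_clinear_A] cinner_scaleR_left
      cinner_scaleR_right real_sqrt_mult mult.assoc [symmetric] flip: power2_eq_square)

lemma A_norm_eq_if_A_eq:
  assumes "A y = A x"
  shows "A_norm A y = A_norm A x"
proof -
  have "cinner (A y) y = cinner y (A x)"
    using hermitian [of y y] assms by simp
  also have "\<dots> = cinner (A y) x"
    by (rule hermitian [symmetric])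
  finally show ?thesis
    by (simp add: A_norm_def assms)
qed

lemma subspace_closure_range: "subspace (closure (range A))"
proof -
  have "subspace (range A)"
    using bounded_clinear_A
    by (auto simp: subspace_def bounded_clinear_zero bounded_clinear_add bounded_clinear_scaleR
        intro: range_eqI [where x = 0] range_eqI [where x = "_ + _"] range_eqI [where x = "_ *\<^sub>R _"])
  then show ?thesis
    by (rule subspace_closure)
qed

lemma scaleC_closure_range: "x \<in> closure (range A) \<Longrightarrow> scaleC c x \<in> closure (range A)"
proof -
  have "scaleC c ` range A \<subseteq> range A"
    by (auto simp flip: bounded_clinear_scaleC [OF bounded_clinear_A])
  then show "x \<in> closure (range A) \<Longrightarrow> scaleC c x \<in> closure (range A)"
    using closure_bounded_linear_image_subset [OF bounded_linear_scaleC, of c "range A"]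
      closure_mono by blast
qed

lemma closure_range_decomposition: "\<exists>p\<in>closure (range A). A (u - p) = 0"
proof -
  obtain p where "p \<in> closure (range A)" and orth: "\<And>m. m \<in> closure (range A) \<Longrightarrow> cinner (u - p) m = 0"
    using orthogonal_projection_exists [of "closure (range A)" u] subspace_closure_range
      scaleC_closure_range by blast
  \<comment> \<open>the orthogonal complement of the range of a hermitian operator is its kernel\<close>
  have "cinner (A (u - p)) v = 0" for v
    using orth [of "A v"] closure_subset [of "range A"] by (auto simp: hermitian)
  then have "A (u - p) = 0"
    by (intro cinner_eqI) simp
  with \<open>p \<in> closure (range A)\<close> show ?thesis
    by blast
qed

lemma A_bounded_if_B_half: "X \<in> B_half A \<Longrightarrow> A_bounded A X"
  using A_norm_bound_if_B_half by (simp add: A_bounded_def B_half_def)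

lemma A_bounded_compose:
  assumes "A_bounded A X" and "A_bounded A Y"
  shows "A_bounded A (\<lambda>x. X (Y x))"
proof -
  obtain c d where "0 \<le> c" "\<And>x. A_norm A (X x) \<le> c * A_norm A x"
    and "0 \<le> d" "\<And>x. A_norm A (Y x) \<le> d * A_norm A x"
    using assms by (auto simp: A_bounded_def)
  then have "A_norm A (X (Y x)) \<le> (c * d) * A_norm A x" for x
    using mult_left_mono [of "A_norm A (Y x)" "d * A_norm A x" c]
    by (simp add: mult.assoc) (meson order_trans)
  moreover have "bounded_clinear (\<lambda>x. X (Y x))"
    using assms by (simp add: A_bounded_def bounded_clinear_compose)
  ultimately show ?thesis
    using \<open>0 \<le> c\<close> \<open>0 \<le> d\<close> unfolding A_bounded_def
    by (intro conjI exI [of _ "c * d"]) simp_all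
qed

lemma A_bounded_funpow: "A_bounded A X \<Longrightarrow> A_bounded A (X ^^ n)"
proof (induction n)
  case 0
  have "A_bounded A (\<lambda>x. x)"
    by (auto simp: A_bounded_def bounded_clinear_ident intro: exI [of _ 1])
  then show ?case
    by (simp add: id_def)
next
  case (Suc n)
  then show ?case
    using A_bounded_compose by (simp add: comp_def)
qed

lemma A_bounded_kernel:
  assumes "A_bounded A X" and "A k = 0"
  shows "A (X k) = 0"
proof -
  obtain c where "\<And>x. A_norm A (X x) \<le> c * A_norm A x"
    using assms(1) by (auto simp: A_bounded_def)
  then have "A_norm A (X k) \<le> c * A_norm A k" .
  then have "A_norm A (X k) \<le> 0"
    using \<open>A k = 0\<close> A_norm_eq_zero_iff [of k] by simp
  then show ?thesis
    using A_norm_nonneg [of "X k"] A_norm_eq_zero_iff by simp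
qed

lemma A_inverse_funpow:
  assumes "A_bounded A T" and TS: "\<And>x. A (T (S x)) = A x"
  shows "A ((T ^^ n) ((S ^^ n) x)) = A x"
proof (induction n)
  case (Suc n)
  let ?y = "(S ^^ n) x"
  have "bounded_clinear (T ^^ n)"
    using A_bounded_funpow [OF assms(1)] by (simp add: A_bounded_def)
  \<comment> \<open>\<open>T S y - y\<close> lies in the kernel of \<open>A\<close>, which \<open>T\<^sup>n\<close> preserves\<close>
  have "A (T (S ?y) - ?y) = 0"
    by (simp add: bounded_clinear_diff [OF bounded_clinear_A] TS)
  then have "A ((T ^^ n) (T (S ?y) - ?y)) = 0"
    by (rule A_bounded_kernel [OF A_bounded_funpow [OF assms(1)]])
  then have "A ((T ^^ n) (T (S ?y))) = A ((T ^^ n) ?y)"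
    by (simp add: bounded_clinear_diff [OF \<open>bounded_clinear (T ^^ n)\<close>]
        bounded_clinear_diff [OF bounded_clinear_A])
  then show ?case
    using Suc by (simp add: funpow_swap1)
qed simp

end

locale nonzero_positive_operator = positive_operator +
  assumes nonzero: "A \<noteq> (\<lambda>x. 0)"
begin

lemma exists_A_unit: "\<exists>x\<in>closure (range A). A_norm A x = 1"
proof -
  obtain v where "A v \<noteq> 0"
    using nonzero by auto
  have "A (A v) \<noteq> 0"
  proof
    assume "A (A v) = 0"
    then have "cinner (A v) (A v) = 0"
      using hermitian [of "A v" v] by simp
    with \<open>A v \<noteq> 0\<close> show False
      by (simp add: cinner_self_eq_norm)
  qed
  then have "0 < A_norm A (A v)"
    using A_norm_nonneg [of "A v"] A_norm_eq_zero_iff [of "A v"] by linarith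
  define x where "x = (1 / A_norm A (A v)) *\<^sub>R A v"
  have "x \<in> range A"
    unfolding x_def bounded_clinear_scaleR [OF bounded_clinear_A, symmetric] by (rule rangeI)
  then have "x \<in> closure (range A)"
    using closure_subset [of "range A"] by blast
  moreover have "A_norm A x = 1"
    using \<open>0 < A_norm A (A v)\<close> by (simp add: x_def A_norm_scaleR)
  ultimately show ?thesis
    by blast
qed

lemma A_norm_le_A_opnorm_unit:
  assumes "A_bounded A X" and "x \<in> closure (range A)" and "A_norm A x = 1"
  shows "A_norm A (X x) \<le> A_opnorm A X"
  unfolding A_opnorm_def
proof (rule cSup_upper)
  obtain c where c: "\<And>x. A_norm A (X x) \<le> c * A_norm A x"
    using assms(1) by (auto simp: A_bounded_def)
  show "bdd_above {A_norm A (X x) |x. x \<in> closure (range A) \<and> A_norm A x = 1}"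
  proof (rule bdd_aboveI [of _ c])
    fix y
    assume "y \<in> {A_norm A (X x) |x. x \<in> closure (range A) \<and> A_norm A x = 1}"
    then obtain x where "y = A_norm A (X x)" and "A_norm A x = 1"
      by blast
    then show "y \<le> c"
      using c [of x] by simp
  qed
qed (use assms in blast)

lemma A_opnorm_nonneg:
  assumes "A_bounded A X"
  shows "0 \<le> A_opnorm A X"
proof -
  obtain x where "x \<in> closure (range A)" and "A_norm A x = 1"
    using exists_A_unit by blast
  then have "A_norm A (X x) \<le> A_opnorm A X"
    by (rule A_norm_le_A_opnorm_unit [OF assms])
  with A_norm_nonneg [of "X x"] show ?thesis
    by linarith
qed

lemma A_norm_le_A_opnorm:
  assumes "A_bounded A X"
  shows "A_norm A (X u) \<le> A_opnorm A X * A_norm A u"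
proof -
  have X: "bounded_clinear X"
    using assms by (simp add: A_bounded_def)
  obtain p where "p \<in> closure (range A)" and "A (u - p) = 0"
    using closure_range_decomposition by blast
  \<comment> \<open>only the component of \<open>u\<close> in the closed range of \<open>A\<close> matters\<close>
  then have "A u = A p" and "A (X u) = A (X p)"
    using A_bounded_kernel [OF assms, of "u - p"]
    by (simp_all add: bounded_clinear_diff [OF bounded_clinear_A] bounded_clinear_diff [OF X])
  then have "A_norm A u = A_norm A p" and "A_norm A (X u) = A_norm A (X p)"
    by (blast intro: A_norm_eq_if_A_eq)+
  moreover have "A_norm A (X p) \<le> A_opnorm A X * A_norm A p"
  proof (cases "A p = 0")
    case True
    then have "A_norm A (X p) = 0"
      using A_bounded_kernel [OF assms] A_norm_eq_zero_iff by blast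
    then show ?thesis
      using True A_norm_eq_zero_iff [of p] by simp
  next
    case False
    then have "0 < A_norm A p"
      using A_norm_nonneg [of p] A_norm_eq_zero_iff [of p] by linarith
    have "(1 / A_norm A p) *\<^sub>R p \<in> closure (range A)"
      using \<open>p \<in> closure (range A)\<close> subspace_closure_range by (rule subspace_scale [rotated])
    moreover have "A_norm A ((1 / A_norm A p) *\<^sub>R p) = 1"
      using \<open>0 < A_norm A p\<close> by (simp add: A_norm_scaleR)
    ultimately have "A_norm A (X ((1 / A_norm A p) *\<^sub>R p)) \<le> A_opnorm A X"
      by (rule A_norm_le_A_opnorm_unit [OF assms])
    then have "A_norm A (X p) / A_norm A p \<le> A_opnorm A X"
      using \<open>0 < A_norm A p\<close> by (simp add: bounded_clinear_scaleR [OF X] A_norm_scaleR)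
    with \<open>0 < A_norm A p\<close> show ?thesis
      by (simp add: pos_divide_le_eq)
  qed
  ultimately show ?thesis
    by simp
qed

lemma A_opnorm_le:
  assumes "\<And>u. A_norm A (X u) \<le> c * A_norm A u"
  shows "A_opnorm A X \<le> c"
  unfolding A_opnorm_def
proof (rule cSup_least)
  show "{A_norm A (X x) |x. x \<in> closure (range A) \<and> A_norm A x = 1} \<noteq> {}"
    using exists_A_unit by blast
  fix y
  assume "y \<in> {A_norm A (X x) |x. x \<in> closure (range A) \<and> A_norm A x = 1}"
  then obtain x where "y = A_norm A (X x)" and "A_norm A x = 1"
    by blast
  then show "y \<le> c"
    using assms [of x] by simp
qed

lemma A_opnorm_funpow_add_le:
  assumes "A_bounded A X"
  shows "A_opnorm A (X ^^ (m + n)) \<le> A_opnorm A (X ^^ m) * A_opnorm A (X ^^ n)"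
proof (rule A_opnorm_le)
  fix u
  have "A_norm A ((X ^^ m) ((X ^^ n) u)) \<le> A_opnorm A (X ^^ m) * A_norm A ((X ^^ n) u)"
    by (rule A_norm_le_A_opnorm [OF A_bounded_funpow [OF assms]])
  also have "\<dots> \<le> A_opnorm A (X ^^ m) * (A_opnorm A (X ^^ n) * A_norm A u)"
    by (intro mult_left_mono A_norm_le_A_opnorm A_opnorm_nonneg A_bounded_funpow assms)
  finally show "A_norm A ((X ^^ (m + n)) u) \<le> A_opnorm A (X ^^ m) * A_opnorm A (X ^^ n) * A_norm A u"
    by (simp add: funpow_add mult.assoc)
qed

lemma one_le_A_opnorm_funpow_mult:
  assumes "A_bounded A T" and "A_bounded A S" and "\<And>x. A (T (S x)) = A x"
  shows "1 \<le> A_opnorm A (T ^^ n) * A_opnorm A (S ^^ n)"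
proof -
  obtain x where "x \<in> closure (range A)" and "A_norm A x = 1"
    using exists_A_unit by blast
  have "1 = A_norm A ((T ^^ n) ((S ^^ n) x))"
    using A_norm_eq_if_A_eq [OF A_inverse_funpow [OF assms(1,3)]] \<open>A_norm A x = 1\<close> by simp
  also have "\<dots> \<le> A_opnorm A (T ^^ n) * A_norm A ((S ^^ n) x)"
    by (intro A_norm_le_A_opnorm A_bounded_funpow assms)
  also have "\<dots> \<le> A_opnorm A (T ^^ n) * (A_opnorm A (S ^^ n) * A_norm A x)"
    by (intro mult_left_mono A_norm_le_A_opnorm A_opnorm_nonneg A_bounded_funpow assms)
  finally show ?thesis
    using \<open>A_norm A x = 1\<close> by simp
qed

end

section \<open>Submultiplicative sequences\<close>

lemma subadditive_iterate:
  fixes l :: "nat \<Rightarrow> real"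
  assumes subadditive: "\<And>m n. l (m + n) \<le> l m + l n"
  shows "l (q * m + r) \<le> real q * l m + l r"
proof (induction q)
  case (Suc q)
  have "l (Suc q * m + r) \<le> l m + l (q * m + r)"
    using subadditive [of m "q * m + r"] by (simp add: add.assoc)
  with Suc show ?case
    by (simp add: algebra_simps)
qed simp

lemma subadditive_quotient_le:
  fixes l :: "nat \<Rightarrow> real"
  assumes subadditive: "\<And>m n. l (m + n) \<le> l m + l n" and "1 \<le> m" and "0 < n"
  shows "l n / real n \<le> l m / real m + ((\<Sum>r<m. \<bar>l r\<bar>) + \<bar>l m\<bar>) / real n"
proof -
  \<comment> \<open>divide \<open>n\<close> by \<open>m\<close>: the quotient contributes \<open>l m / m\<close>, the remainder a bounded error\<close>
  have "n mod m < m"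
    using \<open>1 \<le> m\<close> by simp
  have "l n \<le> real (n div m) * l m + l (n mod m)"
    using subadditive_iterate [OF subadditive, of "n div m" m "n mod m"] by simp
  also have "\<dots> \<le> real n * (l m / real m) + ((\<Sum>r<m. \<bar>l r\<bar>) + \<bar>l m\<bar>)"
  proof -
    have "real n = real (n div m) * real m + real (n mod m)"
      by (metis of_nat_add of_nat_mult div_mult_mod_eq)
    then have "real (n div m) * l m = real n * (l m / real m) - real (n mod m) * l m / real m"
      using \<open>1 \<le> m\<close> by (simp add: field_simps)
    moreover have "\<bar>real (n mod m) * l m / real m\<bar> \<le> \<bar>l m\<bar>"
    proof -
      have "real (n mod m) * \<bar>l m\<bar> \<le> real m * \<bar>l m\<bar>"
        using \<open>n mod m < m\<close> by (intro mult_right_mono) simp_all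
      then show ?thesis
        using \<open>1 \<le> m\<close> by (simp add: abs_mult pos_divide_le_eq mult.commute)
    qed
    moreover have "\<bar>l (n mod m)\<bar> \<le> (\<Sum>r<m. \<bar>l r\<bar>)"
      using \<open>n mod m < m\<close> by (intro member_le_sum) auto
    ultimately show ?thesis
      using abs_ge_self [of "l (n mod m)"] abs_ge_minus_self [of "real (n mod m) * l m / real m"]
      by linarith
  qed
  finally show ?thesis
    using \<open>0 < n\<close> by (simp add: field_simps)
qed

lemma Fekete_subadditive:
  fixes l :: "nat \<Rightarrow> real"
  assumes subadditive: "\<And>m n. l (m + n) \<le> l m + l n"
    and bounded: "\<And>n. 1 \<le> n \<Longrightarrow> L0 \<le> l n / real n"
  shows "(\<lambda>n. l n / real n) \<longlonglongrightarrow> Inf {l n / real n | n. 1 \<le> n}"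
proof -
  define V where "V = {l n / real n | n. 1 \<le> n}"
  have "V \<noteq> {}" and "bdd_below V"
    using bounded by (auto simp: V_def intro!: bdd_belowI [of _ L0])
  have lower: "Inf V \<le> l n / real n" if "1 \<le> n" for n
    using \<open>bdd_below V\<close> that by (auto simp: V_def intro!: cInf_lower)
  show ?thesis
    unfolding V_def [symmetric]
  proof (rule LIMSEQ_I)
    fix \<epsilon> :: real
    assume "0 < \<epsilon>"
    then obtain m where "1 \<le> m" and m: "l m / real m < Inf V + \<epsilon> / 2"
      using cInf_lessD [OF \<open>V \<noteq> {}\<close>, of "Inf V + \<epsilon> / 2"] by (auto simp: V_def)
    define D where "D = (\<Sum>r<m. \<bar>l r\<bar>) + \<bar>l m\<bar>"
    obtain N :: nat where N: "2 * D / \<epsilon> < real N"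
      using reals_Archimedean2 by blast
    have "norm (l n / real n - Inf V) < \<epsilon>" if "max 1 N \<le> n" for n
    proof -
      have "1 \<le> n" and "2 * D / \<epsilon> < real n"
        using that N by auto
      then have "l n / real n \<le> l m / real m + D / real n"
        unfolding D_def using subadditive_quotient_le [OF subadditive \<open>1 \<le> m\<close>] by simp
      moreover have "D / real n < \<epsilon> / 2"
        using \<open>2 * D / \<epsilon> < real n\<close> \<open>0 < \<epsilon>\<close> \<open>1 \<le> n\<close> by (simp add: field_simps)
      ultimately show ?thesis
        using lower [OF \<open>1 \<le> n\<close>] m \<open>0 < \<epsilon>\<close> by (simp only: real_norm_def abs_less_iff) linarith
    qed
    then show "\<exists>N. \<forall>n\<ge>N. norm (l n / real n - Inf V) < \<epsilon>"
      by blast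
  qed
qed

lemma submultiplicative_le_power:
  fixes b :: "nat \<Rightarrow> real"
  assumes submultiplicative: "\<And>m n. b (m + n) \<le> b m * b n" and nonneg: "\<And>n. 0 \<le> b n"
    and "1 \<le> n"
  shows "b n \<le> b 1 ^ n"
  using \<open>1 \<le> n\<close>
proof (induction n rule: dec_induct)
  case (step n)
  have "b (Suc n) \<le> b 1 * b n"
    using submultiplicative [of 1 n] by simp
  also have "\<dots> \<le> b 1 * b 1 ^ n"
    using step.IH nonneg by (intro mult_left_mono) simp_all
  finally show ?case
    by simp
qed simp

lemma submultiplicative_root_convergent:
  fixes a :: "nat \<Rightarrow> real"
  assumes pos: "\<And>n. 0 < a n" and submultiplicative: "\<And>m n. a (m + n) \<le> a m * a n"
    and "0 < c" and lower: "\<And>n. 1 \<le> n \<Longrightarrow> c ^ n \<le> a n"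
  shows "convergent (\<lambda>n. a n powr (1 / real n))"
proof -
  have "(\<lambda>n. ln (a n) / real n) \<longlonglongrightarrow> Inf {ln (a n) / real n | n. 1 \<le> n}"
  proof (rule Fekete_subadditive)
    show "ln (a (m + n)) \<le> ln (a m) + ln (a n)" for m n
    proof -
      have "ln (a (m + n)) \<le> ln (a m * a n)"
        using submultiplicative [of m n] pos by simp
      also have "\<dots> = ln (a m) + ln (a n)"
        using pos [of m] pos [of n] by (rule ln_mult_pos)
      finally show ?thesis .
    qed
    show "ln c \<le> ln (a n) / real n" if "1 \<le> n" for n
      using lower [OF that] \<open>0 < c\<close> pos that by (simp add: pos_le_divide_eq ln_realpow [symmetric] mult.commute)
  qed
  then have "(\<lambda>n. exp (ln (a n) / real n)) \<longlonglongrightarrow> exp (Inf {ln (a n) / real n | n. 1 \<le> n})"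
    by (rule tendsto_exp)
  moreover have "(\<lambda>n. a n powr (1 / real n)) = (\<lambda>n. exp (ln (a n) / real n))"
    using pos by (intro ext) (simp add: powr_def less_imp_neq [symmetric])
  ultimately show ?thesis
    unfolding convergent_def by auto
qed

lemma geometric_lower_bound_by_inverse:
  fixes a b :: "nat \<Rightarrow> real"
  assumes b_nonneg: "\<And>n. 0 \<le> b n" and b_submult: "\<And>m n. b (m + n) \<le> b m * b n"
    and one_le: "\<And>n. 1 \<le> a n * b n" and "1 \<le> n"
  shows "(1 / b 1) ^ n \<le> a n"
proof -
  have "0 < b n" for n
    using one_le [of n] b_nonneg [of n] by (auto simp: order_le_less)
  then have "1 / b 1 ^ n \<le> 1 / b n"
    using submultiplicative_le_power [OF b_submult b_nonneg \<open>1 \<le> n\<close>] by (simp add: frac_le)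
  also have "\<dots> \<le> a n"
    using one_le [of n] \<open>0 < b n\<close> by (simp add: divide_le_eq)
  finally show ?thesis
    by (simp add: power_one_over)
qed

lemma root_limits_mult_ge_one:
  fixes a b :: "nat \<Rightarrow> real"
  assumes a_nonneg: "\<And>n. 0 \<le> a n" and b_nonneg: "\<And>n. 0 \<le> b n"
    and a_submult: "\<And>m n. a (m + n) \<le> a m * a n" and b_submult: "\<And>m n. b (m + n) \<le> b m * b n"
    and one_le: "\<And>n. 1 \<le> a n * b n"
  shows "1 \<le> lim (\<lambda>n. a n powr (1 / real n)) * lim (\<lambda>n. b n powr (1 / real n))"
proof -
  have one_le': "1 \<le> b n * a n" for n
    using one_le [of n] by (simp add: mult.commute)
  have a_pos: "0 < a n" and b_pos: "0 < b n" for n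
    using one_le [of n] a_nonneg [of n] b_nonneg [of n] by (auto simp: order_le_less)
  have "convergent (\<lambda>n. a n powr (1 / real n))"
    using b_pos [of 1] geometric_lower_bound_by_inverse [OF b_nonneg b_submult one_le]
    by (intro submultiplicative_root_convergent [OF a_pos a_submult, of "1 / b 1"]) simp_all
  moreover have "convergent (\<lambda>n. b n powr (1 / real n))"
    using a_pos [of 1] geometric_lower_bound_by_inverse [OF a_nonneg a_submult one_le']
    by (intro submultiplicative_root_convergent [OF b_pos b_submult, of "1 / a 1"]) simp_all
  ultimately have "(\<lambda>n. a n powr (1 / real n) * b n powr (1 / real n))
    \<longlonglongrightarrow> lim (\<lambda>n. a n powr (1 / real n)) * lim (\<lambda>n. b n powr (1 / real n))"
    by (intro tendsto_mult) (simp_all add: convergent_LIMSEQ_iff)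
  moreover have "1 \<le> a n powr (1 / real n) * b n powr (1 / real n)" for n
    using one_le [of n] a_nonneg b_nonneg by (simp add: powr_mult [symmetric] ge_one_powr_ge_zero)
  ultimately show ?thesis
    using LIMSEQ_le_const by blast
qed

theorem mainTheorem12:
  fixes A T S :: "'a::chilbert \<Rightarrow> 'a"
  assumes "bounded_clinear A"
    and "positive_op A"
    and "A \<noteq> (\<lambda>x. 0)"
    and "A_inverse A T S"
  shows "A_spectral_radius A T * A_spectral_radius A S \<ge> 1"
proof -
  interpret nonzero_positive_operator A
    using assms(1-3) by unfold_locales
  have T: "A_bounded A T" and S: "A_bounded A S" and TS: "\<And>x. A (T (S x)) = A x"
    using assms(4) A_bounded_if_B_half by (auto simp: A_inverse_def)
  have "1 \<le> lim (\<lambda>n. A_opnorm A (T ^^ n) powr (1 / real n)) * lim (\<lambda>n. A_opnorm A (S ^^ n) powr (1 / real n))"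
    using T S by (intro root_limits_mult_ge_one A_opnorm_nonneg A_bounded_funpow
        A_opnorm_funpow_add_le one_le_A_opnorm_funpow_mult TS)
  then show ?thesis
    by (simp add: A_spectral_radius_def)
qed

end
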